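(* Let $\alpha,\beta>0$, let $g(n)=\sum_{i=0}^k c_in^i$ be a polynomial of degree $k\ge1$ (so $c_k\ne0$), and let $x$ be a sequence (with given $x(1)$) satisfying \[x(n)=\alpha\,x(\lfloor n/2\rfloor)+\beta\,x(\lceil n/2\rceil)+g(n)\qquad(n\ge2).\] Let $d_0\coloneqq(1-\beta)x(1)-g(1)+g(0)$ and $d_1\coloneqq g(1)-(1-\beta)x(1)$. Then, as $n\to\infty$, with suitable $1$-periodic continuous functions $\Phi$ and $\Psi$: (1a) If $\alpha+\beta>2^k$ and $2^k>\max\{\alpha,\beta\}$, then $x(n)=n^{\log_2(\alpha+\beta)}\Phi(\{\log_2n\})+n^k\Psi(\{\log_2n\})+O(n^{\log_2\max\{\alpha,\beta\}})$. (1b) If $\alpha+\beta>2^k$ and $\max\{\alpha,\beta\}\ge2^k$, then $x(n)=n^{\log_2(\alpha+\beta)}\Phi(\{\log_2n\})+O\big(n^{\log_2\max\{\alpha,\beta\}}(\log n)^{[\max\{\alpha,\beta\}=2^k]}\big)$. (2) If $\alpha+\beta=2^k$, then for every $\varepsilon>0$, $x(n)=n^k(\log n)\Phi(\{\log_2n\})+n^k\Psi(\{\log_2n\})+O\big(n^{\log_2\max\{\alpha,\beta\}+[\alpha=\beta]\varepsilon}\big)$. (3) If $2^k>\alpha+\beta>2^{k-1}$, then for every $\varepsilon>0$, $x(n)=n^k\Phi(\{\log_2n\})+n^{\log_2(\alpha+\beta)}\Psi(\{\log_2n\})+O\big(n^{\log_2\max\{\alpha,\beta,2^{k-1}\}+[\max\{\alpha,\beta\}=2^{k-1}]\varepsilon}(\log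 n)^{[\max\{\alpha,\beta\}<2^{k-1}]}\big)$. (4) If $2^{k-1}\ge\alpha+\beta$, then $x(n)=n^k\Phi(\{\log_2n\})+O(n^{k-1}(\log n)^E)$, where $E\coloneqq1+[\alpha+\beta=2^{k-1}]\big([k\ge2\text{ and }c_{k-1}\ne0]+[k=1\text{ and }d_0+d_1\ne0]\big)$.
   Context: $\{z\}=z-\lfloor z\rfloor$ denotes the fractional part of a real number $z$. Iverson's bracket: $[S]=1$ if the statement $S$ is true and $0$ otherwise. The values $g(0),g(1)$ are the values of the polynomial $g$ (they do not enter the recurrence). *)

theory Defs
  imports "HOL-Analysis.Analysis" "HOL-Computational_Algebra.Polynomial"
    "HOL-Library.Landau_Symbols"
begin

definition iverson :: "bool \<Rightarrow> 'a::{zero,one}" where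
  "iverson S = (if S then 1 else 0)"

definition periodic1_cont :: "(real \<Rightarrow> real) \<Rightarrow> bool" where
  "periodic1_cont \<Phi> \<longleftrightarrow> continuous_on UNIV \<Phi> \<and> (\<forall>t. \<Phi> (t + 1) = \<Phi> t)"

end

theory Submission
  imports Defs
begin

text \<open>
  Write \<open>s = \<alpha> + \<beta>\<close>. Solving \<open>P(2y) = s P(y) + g(2y)\<close> monomial by monomial gives
  an explicit particular solution \<open>P\<close>, with a factor \<open>log y\<close> at a resonance \<open>2^i = s\<close>.
  The remainder \<open>z = x - P\<close> then satisfies \<open>z(2m) = s z(m)\<close> exactly and
  \<open>z(2m+1) = \<alpha> z(m) + \<beta> z(m+1) + h(m)\<close>, where the defect \<open>h\<close> is small because \<open>P\<close>
  is smooth. If \<open>h\<close> grows more slowly than \<open>n^(log\<^sub>2 s)\<close>, the increments of \<open>z\<close> are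
  \<open>O(n^r)\<close> with \<open>2^r < s\<close>, so the rescaled values \<open>z\<lfloor>y 2^j\<rfloor> / s^j\<close> converge to a
  continuous \<open>A\<close> with \<open>A(2y) = s A(y)\<close> and \<open>A(n) = z(n)\<close>; hence
  \<open>z(n) = n^(log\<^sub>2 s) \<Phi>({log\<^sub>2 n})\<close> exactly. Otherwise a halving recurrence bounds
  \<open>z(n) = O(n^(k-1) log n)\<close>. Each regime of the theorem is then read off from the
  dominant monomials of \<open>P\<close>.
\<close>

lemma halving_recurrence_bound:
  fixes f :: "nat \<Rightarrow> real" and a C r :: real
  assumes a: "0 \<le> a" "a < 2 powr r" and C: "0 \<le> C" and r: "0 \<le> r"
    and rec: "\<And>n. 2 \<le> n \<Longrightarrow> \<bar>f n\<bar> \<le> a * \<bar>f (n div 2)\<bar> + C * real n powr r"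
  shows "\<exists>K. \<forall>n\<ge>1. \<bar>f n\<bar> \<le> K * real n powr r"
proof -
  define \<rho> where "\<rho> = a / 2 powr r"
  have \<rho>: "0 \<le> \<rho>" "\<rho> < 1" using a unfolding \<rho>_def by auto
  define K where "K = max \<bar>f 1\<bar> (C / (1 - \<rho>))"
  have K: "0 \<le> K" "K * \<rho> + C \<le> K"
  proof -
    have "C = C / (1 - \<rho>) * (1 - \<rho>)" using \<rho> by simp
    also have "\<dots> \<le> K * (1 - \<rho>)" unfolding K_def by (rule mult_right_mono) (use \<rho> in auto)
    finally show "K * \<rho> + C \<le> K" by (simp add: algebra_simps)
  qed (simp add: K_def)
  have "\<bar>f n\<bar> \<le> K * real n powr r" if "1 \<le> n" for n
    using that
  proof (induction n rule: less_induct)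
    case (less n)
    show ?case
    proof (cases "n = 1")
      case False
      then have n: "2 \<le> n" using less.prems by simp
      have "real (n div 2) powr r \<le> (real n / 2) powr r"
        using n r by (intro powr_mono2) linarith+
      also have "\<dots> = real n powr r / 2 powr r" by (simp add: powr_divide)
      finally have half: "a * (K * real (n div 2) powr r) \<le> K * \<rho> * real n powr r"
        using a K unfolding \<rho>_def by (auto intro: mult_left_mono simp: field_simps)
      have "\<bar>f (n div 2)\<bar> \<le> K * real (n div 2) powr r"
        using less.IH[of "n div 2"] n by simp
      then have "\<bar>f n\<bar> \<le> a * (K * real (n div 2) powr r) + C * real n powr r"
        using rec[OF n] a(1) by (meson add_right_mono mult_left_mono order.trans)
      also have "\<dots> \<le> (K * \<rho> + C) * real n powr r" using half by (simp add: algebra_simps)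
      also have "\<dots> \<le> K * real n powr r" using K by (intro mult_right_mono) auto
      finally show ?thesis .
    qed (simp add: K_def)
  qed
  then show ?thesis by blast
qed

lemma halving_recurrence_bound_log:
  fixes f :: "nat \<Rightarrow> real" and a C q :: real
  assumes a: "0 \<le> a" "a \<le> 2 powr q" and C: "0 \<le> C" and q: "0 \<le> q"
    and rec: "\<And>n. 2 \<le> n \<Longrightarrow> \<bar>f n\<bar> \<le> a * \<bar>f (n div 2)\<bar> + C * real n powr q"
  shows "\<exists>K. \<forall>n\<ge>1. \<bar>f n\<bar> \<le> K * real n powr q * (log 2 (real n) + 1)"
proof -
  define K where "K = max \<bar>f 1\<bar> C"
  have K: "0 \<le> K" "C \<le> K" by (simp_all add: K_def)
  have "\<bar>f n\<bar> \<le> K * real n powr q * (log 2 (real n) + 1)" if "1 \<le> n" for n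
    using that
  proof (induction n rule: less_induct)
    case (less n)
    show ?case
    proof (cases "n = 1")
      case False
      then have n: "2 \<le> n" using less.prems by simp
      define m where "m = n div 2"
      have m: "1 \<le> real m" "real m \<le> real n / 2"
        using n unfolding m_def by simp linarith
      have "real m powr q \<le> (real n / 2) powr q" using m q by (intro powr_mono2) auto
      also have "\<dots> = real n powr q / 2 powr q" by (simp add: powr_divide)
      finally have am: "a * real m powr q \<le> real n powr q"
        using a by (auto simp: field_simps intro: order.trans[OF mult_right_mono])
      have "log 2 (real m) + 1 = log 2 (2 * real m)" using m by (simp add: log_mult)
      also have "\<dots> \<le> log 2 (real n)" using m by simp
      finally have lm: "0 \<le> log 2 (real m)" "log 2 (real m) + 1 \<le> log 2 (real n)"
        using m by simp_all
      have "\<bar>f m\<bar> \<le> K * real m powr q * (log 2 (real m) + 1)"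
        using less.IH[of m] n unfolding m_def by simp
      then have "\<bar>f n\<bar> \<le> a * (K * real m powr q * (log 2 (real m) + 1)) + C * real n powr q"
        using rec[OF n] a(1) unfolding m_def by (meson add_right_mono mult_left_mono order.trans)
      also have "\<dots> = K * (log 2 (real m) + 1) * (a * real m powr q) + C * real n powr q"
        by (simp add: algebra_simps)
      also have "\<dots> \<le> K * log 2 (real n) * real n powr q + K * real n powr q"
        using am lm K a(1) by (intro add_mono mult_mono mult_right_mono) auto
      finally show ?thesis by (simp add: algebra_simps)
    qed (simp add: K_def)
  qed
  then show ?thesis by blast
qed

lemma geometric_increments_convergent:
  fixes a :: "nat \<Rightarrow> real"
  assumes \<theta>: "0 \<le> \<theta>" "\<theta> < 1" and K: "0 \<le> K"
    and step: "\<And>j. J \<le> j \<Longrightarrow> \<bar>a (Suc j) - a j\<bar> \<le> K * \<theta>^j"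
  shows "convergent a" and "\<And>j. J \<le> j \<Longrightarrow> \<bar>lim a - a j\<bar> \<le> K * \<theta>^j / (1 - \<theta>)"
proof -
  have tail: "\<bar>a m - a j\<bar> \<le> K * \<theta>^j / (1 - \<theta>)" if "J \<le> j" "j \<le> m" for j m
  proof -
    have "\<bar>a m - a j\<bar> \<le> K * (\<theta>^j - \<theta>^m) / (1 - \<theta>)"
      using that(2)
    proof (induction m rule: dec_induct)
      case (step m)
      have "\<bar>a (Suc m) - a j\<bar> \<le> \<bar>a m - a j\<bar> + \<bar>a (Suc m) - a m\<bar>" by linarith
      also have "\<dots> \<le> K * (\<theta>^j - \<theta>^m) / (1 - \<theta>) + K * \<theta>^m"
        using step.IH assms(4)[of m] step.hyps that(1) by (intro add_mono) auto
      also have "\<dots> = K * (\<theta>^j - \<theta>^Suc m) / (1 - \<theta>)" using \<theta> by (simp add: field_simps)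
      finally show ?case .
    qed simp
    also have "\<dots> \<le> K * \<theta>^j / (1 - \<theta>)"
      using \<theta> K by (intro divide_right_mono mult_left_mono) auto
    finally show ?thesis .
  qed
  have "Cauchy a"
  proof (rule metric_CauchyI)
    fix e :: real assume "0 < e"
    have "(\<lambda>j. 2 * (K * \<theta>^j / (1 - \<theta>))) \<longlonglongrightarrow> 2 * (K * 0 / (1 - \<theta>))"
      using \<theta> by (intro tendsto_intros LIMSEQ_power_zero) auto
    then obtain M0 where M0: "\<And>j. M0 \<le> j \<Longrightarrow> 2 * (K * \<theta>^j / (1 - \<theta>)) < e"
      using \<open>0 < e\<close> unfolding order_tendsto_iff eventually_sequentially by force
    define M where "M = max M0 J"
    have M: "2 * (K * \<theta>^M / (1 - \<theta>)) < e" "J \<le> M" using M0 by (simp_all add: M_def)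
    show "\<exists>M. \<forall>m\<ge>M. \<forall>n\<ge>M. dist (a m) (a n) < e"
    proof (intro exI allI impI)
      fix m n assume "M \<le> m" "M \<le> n"
      then show "dist (a m) (a n) < e"
        using tail[of M m] tail[of M n] M by (simp add: dist_real_def)
    qed
  qed
  then show conv: "convergent a" by (simp add: Cauchy_convergent_iff)
  show "\<bar>lim a - a j\<bar> \<le> K * \<theta>^j / (1 - \<theta>)" if "J \<le> j" for j
  proof (rule LIMSEQ_le_const2)
    show "(\<lambda>m. \<bar>a m - a j\<bar>) \<longlonglongrightarrow> \<bar>lim a - a j\<bar>"
      using conv by (intro tendsto_intros) (simp add: convergent_LIMSEQ_iff)
  qed (use tail that in blast)
qed

lemma log_le_powr_div:
  fixes t \<delta> :: real assumes "1 \<le> t" "0 < \<delta>"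
  shows "log 2 t \<le> t powr \<delta> / (\<delta> * ln 2)"
  using ln_powr_bound[OF assms] by (simp add: log_def field_simps)

lemma ln_ge_one: "3 \<le> n \<Longrightarrow> 1 \<le> ln (real n)"
  using exp_le ln_ge_iff[of "real n" 1] by linarith

lemma real_le_log2_of_power_le: "(2::real)^j \<le> v \<Longrightarrow> real j \<le> log 2 v"
  using log_mono[of 2 "2^j" v] by (simp add: log_nat_power)

lemma iverson_nonneg: "0 \<le> (iverson P :: real)"
  by (simp add: iverson_def)

lemma periodic1_cont_const: "periodic1_cont (\<lambda>_. c)"
  by (simp add: periodic1_cont_def)

lemma bigo_cmult: "f \<in> O[F](g) \<Longrightarrow> (\<lambda>x. c * f x) \<in> O[F](g)"
  by (cases "c = 0") simp_all

lemma power_bigo_powr: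
  assumes "real K \<le> e" shows "(\<lambda>n. real n ^ K) \<in> O(\<lambda>n. real n powr e)"
proof (rule bigoI[where c = 1])
  show "\<forall>\<^sub>F n in sequentially. norm (real n ^ K) \<le> 1 * norm (real n powr e)"
    using eventually_ge_at_top[of 1]
  proof eventually_elim
    case (elim n)
    then show ?case using powr_mono[OF assms, of "real n"] by (simp add: powr_realpow)
  qed
qed

lemma bigo_mult_ln_power:
  fixes f g :: "nat \<Rightarrow> real"
  assumes "f \<in> O(g)" shows "f \<in> O(\<lambda>n. g n * ln (real n) ^ E)"
proof (rule landau_o.big_mult_1[OF assms], rule bigoI[where c = 1])
  show "\<forall>\<^sub>F n in sequentially. norm (1::real) \<le> 1 * norm (ln (real n) ^ E)"
    using eventually_ge_at_top[of 3]
    by eventually_elim (use ln_ge_one in \<open>auto intro: one_le_power\<close>)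
qed

lemma bigo_cong_ge_1:
  fixes f g :: "nat \<Rightarrow> real"
  assumes "g \<in> O(h)" "\<And>n. 1 \<le> n \<Longrightarrow> f n = g n" shows "f \<in> O(h)"
proof -
  have "eventually (\<lambda>n. f n = g n) sequentially"
    using eventually_ge_at_top[of 1] by (rule eventually_mono) (use assms in auto)
  then show ?thesis using landau_o.big.in_cong assms(1) by blast
qed

section \<open>Functions and sequences that are homogeneous under doubling\<close>

lemma periodic1_cont_frac:
  assumes "periodic1_cont \<Phi>"
  shows "\<Phi> (frac t) = \<Phi> t"
proof -
  have nat_shift: "\<Phi> (u + real n) = \<Phi> u" for u n
    using assms unfolding periodic1_cont_def
    by (induction n arbitrary: u) (auto simp: add.assoc[symmetric])
  have int_shift: "\<Phi> (u + of_int m) = \<Phi> u" for u m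
  proof (cases "0 \<le> m")
    case True
    then show ?thesis using nat_shift[of u "nat m"] by simp
  next
    case False
    then show ?thesis using nat_shift[of "u + of_int m" "nat (- m)"] by simp
  qed
  show ?thesis using int_shift[of "frac t" "\<lfloor>t\<rfloor>"] by (simp add: frac_def)
qed

lemma homogeneous_periodic_factor:
  assumes s: "0 < s" and cont: "\<And>y. 0 < y \<Longrightarrow> isCont A y"
    and double: "\<And>y. 0 < y \<Longrightarrow> A (2 * y) = s * A y"
  shows "\<exists>\<Phi>. periodic1_cont \<Phi> \<and> (\<forall>y>0. A y = y powr log 2 s * \<Phi> (frac (log 2 y)))"
proof -
  define p where "p = log 2 s"
  define \<Phi> where "\<Phi> t = A (2 powr t) * 2 powr (- (t * p))" for t
  have "\<Phi> (t + 1) = \<Phi> t" for t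
  proof -
    have "2 powr (- ((t + 1) * p)) = 2 powr (- (t * p)) * 2 powr (- p)"
      by (simp add: powr_add[symmetric] algebra_simps)
    also have "2 powr (- p) = 1 / s" using s by (simp add: p_def powr_minus divide_inverse)
    finally have "2 powr (- ((t + 1) * p)) = 2 powr (- (t * p)) / s" by simp
    then show ?thesis
      using double[of "2 powr t"] s by (simp add: \<Phi>_def powr_add mult.commute)
  qed
  moreover have "continuous_on UNIV \<Phi>"
    unfolding \<Phi>_def
    by (intro continuous_at_imp_continuous_on ballI continuous_intros
        continuous_at_compose[of _ "\<lambda>t. 2 powr t" A, unfolded o_def] cont) auto
  ultimately have per: "periodic1_cont \<Phi>" by (simp add: periodic1_cont_def)
  have "A y = y powr p * \<Phi> (frac (log 2 y))" if "0 < y" for y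
  proof -
    have "\<Phi> (frac (log 2 y)) = \<Phi> (log 2 y)" by (rule periodic1_cont_frac[OF per])
    also have "\<dots> = A y / y powr p"
      using that by (simp add: \<Phi>_def powr_minus powr_powr[symmetric] divide_inverse)
    finally show ?thesis using that by simp
  qed
  with per show ?thesis unfolding p_def by blast
qed

locale doubling_sequence =
  fixes s r K :: real and z :: "nat \<Rightarrow> real"
  assumes r_nonneg: "0 \<le> r" and growth: "2 powr r < s"
    and double: "\<And>m. 1 \<le> m \<Longrightarrow> z (2 * m) = s * z m"
    and increment: "\<And>n. 1 \<le> n \<Longrightarrow> \<bar>z (Suc n) - z n\<bar> \<le> K * real n powr r"
begin

lemma s_pos: "0 < s"
  using growth powr_gt_zero[of 2 r] by linarith

lemma K_nonneg: "0 \<le> K"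
  using increment[of 1] abs_ge_zero[of "z 2 - z 1"] by simp

definition ratio :: real where "ratio = 2 powr r / s"

lemma ratio_bounds: "0 < ratio" "ratio < 1"
  using growth s_pos by (simp_all add: ratio_def)

lemma increment_le:
  assumes "1 \<le> N" "real N \<le> w" shows "\<bar>z (Suc N) - z N\<bar> \<le> K * w powr r"
proof -
  have "real N powr r \<le> w powr r" using assms r_nonneg by (intro powr_mono2) auto
  then show ?thesis using increment[OF assms(1)] K_nonneg by (meson mult_left_mono order.trans)
qed

lemma powr_scale: "0 < y \<Longrightarrow> K * (y * 2^j) powr r / s^j = K * y powr r * ratio^j"
  by (simp add: ratio_def powr_mult powr_realpow[symmetric] powr_powr power_divide mult.commute)

definition dyadic_approx :: "nat \<Rightarrow> real \<Rightarrow> real" where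
  "dyadic_approx j y = z (nat \<lfloor>y * 2^j\<rfloor>) / s^j"

lemma dyadic_approx_step:
  assumes y: "0 < y" and j: "1 \<le> y * 2^j"
  shows "\<bar>dyadic_approx (Suc j) y - dyadic_approx j y\<bar> \<le> K * y powr r * ratio^Suc j"
proof -
  define N where "N = nat \<lfloor>y * 2^j\<rfloor>"
  have N: "1 \<le> N" "real N \<le> y * 2^j" using j unfolding N_def by linarith+
  have prev: "dyadic_approx j y = z (2 * N) / s^Suc j"
    using double[OF N(1)] s_pos by (simp add: dyadic_approx_def N_def[symmetric])
  have "nat \<lfloor>y * 2^Suc j\<rfloor> = 2 * N \<or> nat \<lfloor>y * 2^Suc j\<rfloor> = Suc (2 * N)"
    using j unfolding N_def by simp linarith
  then show ?thesis
  proof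
    assume "nat \<lfloor>y * 2^Suc j\<rfloor> = 2 * N"
    then have "dyadic_approx (Suc j) y = z (2 * N) / s^Suc j"
      by (simp only: dyadic_approx_def)
    then have "dyadic_approx (Suc j) y = dyadic_approx j y" using prev by simp
    then show ?thesis using K_nonneg ratio_bounds y by simp
  next
    assume "nat \<lfloor>y * 2^Suc j\<rfloor> = Suc (2 * N)"
    then have "dyadic_approx (Suc j) y = z (Suc (2 * N)) / s^Suc j"
      by (simp only: dyadic_approx_def)
    then have "\<bar>dyadic_approx (Suc j) y - dyadic_approx j y\<bar> = \<bar>z (Suc (2 * N)) - z (2 * N)\<bar> / s^Suc j"
      using prev s_pos by (simp add: diff_divide_distrib[symmetric])
    also have "\<dots> \<le> K * (y * 2^Suc j) powr r / s^Suc j"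
      using increment_le[of "2 * N" "y * 2^Suc j"] N s_pos by (intro divide_right_mono) auto
    also have "\<dots> = K * y powr r * ratio^Suc j" by (rule powr_scale[OF y])
    finally show ?thesis .
  qed
qed

definition extension :: "real \<Rightarrow> real" where
  "extension y = lim (\<lambda>j. dyadic_approx j y)"

lemma dyadic_approx_convergent:
  assumes y: "0 < y" and j: "1 \<le> y * 2^j"
  shows "convergent (\<lambda>i. dyadic_approx i y)"
    and "\<bar>extension y - dyadic_approx j y\<bar> \<le> K * y powr r * ratio * ratio^j / (1 - ratio)"
proof -
  have "1 \<le> y * 2^i" if "j \<le> i" for i
  proof -
    have "y * 2^j \<le> y * 2^i" using y that by (intro mult_left_mono power_increasing) auto
    then show ?thesis using j by linarith
  qed
  then have step: "\<And>i. j \<le> i \<Longrightarrow>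
      \<bar>dyadic_approx (Suc i) y - dyadic_approx i y\<bar> \<le> (K * y powr r * ratio) * ratio^i"
    using dyadic_approx_step[OF y] by (simp add: mult.assoc)
  have "0 \<le> K * y powr r * ratio" using K_nonneg ratio_bounds by simp
  note geo = geometric_increments_convergent[OF less_imp_le[OF ratio_bounds(1)] ratio_bounds(2) this step]
  show "convergent (\<lambda>i. dyadic_approx i y)" by (rule geo(1))
  show "\<bar>extension y - dyadic_approx j y\<bar> \<le> K * y powr r * ratio * ratio^j / (1 - ratio)"
    using geo(2)[of j] by (simp add: extension_def)
qed

lemma dyadic_index_exists:
  fixes y :: real assumes "0 < y" obtains j where "1 \<le> y * 2^j"
proof -
  obtain j where "1 / y < 2^j" using real_arch_pow[of 2 "1 / y"] by auto
  then show ?thesis using assms that[of j] by (simp add: field_simps)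
qed

lemma dyadic_approx_tendsto:
  assumes "0 < y" shows "(\<lambda>j. dyadic_approx j y) \<longlonglongrightarrow> extension y"
proof -
  obtain j where "1 \<le> y * 2^j" using dyadic_index_exists[OF assms] .
  then show ?thesis using dyadic_approx_convergent(1)[OF assms]
    by (simp add: extension_def convergent_LIMSEQ_iff)
qed

lemma extension_double:
  assumes "0 < y" shows "extension (2 * y) = s * extension y"
proof -
  have "(\<lambda>j. dyadic_approx j (2 * y)) = (\<lambda>j. s * dyadic_approx (Suc j) y)"
    using s_pos by (auto simp: dyadic_approx_def mult_ac)
  moreover have "(\<lambda>j. s * dyadic_approx (Suc j) y) \<longlonglongrightarrow> s * extension y"
    using dyadic_approx_tendsto[OF assms] by (intro tendsto_mult_left) (rule LIMSEQ_Suc)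
  ultimately show ?thesis
    using LIMSEQ_unique[OF dyadic_approx_tendsto[of "2 * y"]] assms by simp
qed

lemma extension_nat:
  assumes n: "1 \<le> n" shows "extension (real n) = z n"
proof -
  have "z (n * 2^j) = s^j * z n" for j
  proof (induction j)
    case (Suc j)
    have "z (2 * (n * 2^j)) = s * z (n * 2^j)" using double n by simp
    then show ?case using Suc by (simp add: mult_ac)
  qed simp
  moreover have "nat \<lfloor>real n * 2^j\<rfloor> = n * 2^j" for j
    by (metis floor_of_nat nat_int of_nat_mult of_nat_numeral of_nat_power)
  ultimately have "dyadic_approx j (real n) = z n" for j
    using s_pos by (simp add: dyadic_approx_def)
  then show ?thesis by (simp add: extension_def)
qed

lemma dyadic_approx_close:
  assumes j: "1 \<le> y * 2^j" "1 \<le> y' * 2^j" and close: "\<bar>y - y'\<bar> < 1 / 2^j"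
    and Y: "y \<le> Y" "y' \<le> Y"
  shows "\<bar>dyadic_approx j y - dyadic_approx j y'\<bar> \<le> K * Y powr r * ratio^j"
proof -
  define N N' where "N = nat \<lfloor>y * 2^j\<rfloor>" and "N' = nat \<lfloor>y' * 2^j\<rfloor>"
  have "y * 2^j \<le> Y * 2^j" "y' * 2^j \<le> Y * 2^j" using Y by simp_all
  moreover have "real N \<le> y * 2^j" "y * 2^j < real N + 1" "real N' \<le> y' * 2^j"
    "y' * 2^j < real N' + 1" using j unfolding N_def N'_def by linarith+
  ultimately have N: "1 \<le> N" "real N \<le> Y * 2^j" "1 \<le> N'" "real N' \<le> Y * 2^j"
    using j unfolding N_def N'_def by linarith+
  have "\<bar>y * 2^j - y' * 2^j\<bar> = \<bar>y - y'\<bar> * 2^j"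
    by (simp add: left_diff_distrib[symmetric] abs_mult)
  also have "\<dots> < 1" using close by (simp add: field_simps)
  finally have "\<bar>y * 2^j - y' * 2^j\<bar> < 1" .
  then have "real N < real N' + 2" "real N' < real N + 2" using \<open>real N \<le> y * 2^j\<close>
      \<open>y * 2^j < real N + 1\<close> \<open>real N' \<le> y' * 2^j\<close> \<open>y' * 2^j < real N' + 1\<close>
    by linarith+
  then have "N = N' \<or> N = Suc N' \<or> N' = Suc N" by linarith
  then have "\<bar>z N - z N'\<bar> \<le> K * (Y * 2^j) powr r"
  proof (elim disjE)
    assume "N = Suc N'"
    then show ?thesis using increment_le[of N' "Y * 2^j"] N by simp
  next
    assume "N' = Suc N"
    then show ?thesis using increment_le[of N "Y * 2^j"] N by (simp add: abs_minus_commute)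
  qed (use K_nonneg in simp)
  then have "\<bar>z N - z N'\<bar> / s^j \<le> K * (Y * 2^j) powr r / s^j"
    using s_pos by (intro divide_right_mono) auto
  also have "\<dots> = K * Y powr r * ratio^j"
  proof (rule powr_scale)
    have "0 < y * 2^j" using j(1) by linarith
    then show "0 < Y" using Y(1) by (simp add: zero_less_mult_iff)
  qed
  finally show ?thesis
    using s_pos by (simp add: dyadic_approx_def N_def N'_def diff_divide_distrib[symmetric])
qed

lemma extension_close:
  assumes y: "0 < y" "0 < y'" "y \<le> Y" "y' \<le> Y" and j: "1 \<le> y * 2^j" "1 \<le> y' * 2^j"
    and close: "\<bar>y - y'\<bar> < 1 / 2^j"
  shows "\<bar>extension y - extension y'\<bar> \<le> K * Y powr r * (2 * ratio / (1 - ratio) + 1) * ratio^j"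
proof -
  have tail: "\<bar>extension v - dyadic_approx j v\<bar> \<le> K * Y powr r * ratio * ratio^j / (1 - ratio)"
    if "0 < v" "v \<le> Y" "1 \<le> v * 2^j" for v
  proof -
    have "v powr r \<le> Y powr r" using that r_nonneg by (intro powr_mono2) auto
    then have "K * v powr r * (ratio * ratio^j / (1 - ratio))
        \<le> K * Y powr r * (ratio * ratio^j / (1 - ratio))"
      using K_nonneg ratio_bounds by (intro mult_right_mono mult_left_mono) auto
    then show ?thesis using dyadic_approx_convergent(2)[OF that(1,3)] by (simp add: mult.assoc)
  qed
  have "\<bar>extension y - extension y'\<bar> \<le> \<bar>extension y - dyadic_approx j y\<bar>
      + \<bar>extension y' - dyadic_approx j y'\<bar> + \<bar>dyadic_approx j y - dyadic_approx j y'\<bar>"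
    by linarith
  also have "\<dots> \<le> 2 * (K * Y powr r * ratio * ratio^j / (1 - ratio)) + K * Y powr r * ratio^j"
    using tail[of y] tail[of y'] dyadic_approx_close[OF j close y(3,4)] y j by linarith
  also have "\<dots> = K * Y powr r * (2 * ratio / (1 - ratio) + 1) * ratio^j"
    using ratio_bounds by (simp add: field_simps)
  finally show ?thesis .
qed

lemma isCont_extension:
  assumes y0: "0 < y0" shows "isCont extension y0"
  unfolding continuous_at_eps_delta
proof (intro allI impI)
  fix e :: real assume "0 < e"
  define W where "W = K * (2 * y0) powr r * (2 * ratio / (1 - ratio) + 1)"
  obtain J0 where J0: "1 \<le> y0 / 2 * 2^J0" using dyadic_index_exists[of "y0 / 2"] y0 by auto
  have "(\<lambda>j. W * ratio^j) \<longlonglongrightarrow> W * 0"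
    using ratio_bounds by (intro tendsto_intros LIMSEQ_power_zero) auto
  then obtain J1 where J1: "\<And>j. J1 \<le> j \<Longrightarrow> W * ratio^j < e"
    using \<open>0 < e\<close> unfolding order_tendsto_iff eventually_sequentially by force
  define j where "j = max J0 J1"
  have "y0 / 2 * 2^J0 \<le> y0 / 2 * 2^j" using y0 by (simp add: j_def)
  with J0 have j: "1 \<le> y0 / 2 * 2^j" by linarith
  show "\<exists>d>0. \<forall>y. dist y y0 < d \<longrightarrow> dist (extension y) (extension y0) < e"
  proof (intro exI[of _ "min (y0 / 2) (1 / 2^j)"] conjI allI impI)
    fix y assume "dist y y0 < min (y0 / 2) (1 / 2^j)"
    then have close: "\<bar>y - y0\<bar> < y0 / 2" "\<bar>y - y0\<bar> < 1 / 2^j"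
      by (simp_all add: dist_real_def)
    have y: "0 < y" "y \<le> 2 * y0" "y0 \<le> 2 * y0" "y0 / 2 \<le> y" using close y0 by linarith+
    then have "y0 / 2 * 2^j \<le> y * 2^j" "y0 / 2 * 2^j \<le> y0 * 2^j" using y0 by simp_all
    then have yj: "1 \<le> y * 2^j" "1 \<le> y0 * 2^j" using j by linarith+
    have "\<bar>extension y - extension y0\<bar> \<le> W * ratio^j"
      using extension_close[OF y(1) y0 y(2,3) yj close(2)] by (simp add: W_def)
    also have "\<dots> < e" using J1 by (simp add: j_def)
    finally show "dist (extension y) (extension y0) < e" by (simp add: dist_real_def)
  qed (use y0 in simp)
qed

lemma periodic_representation:
  "\<exists>\<Phi>. periodic1_cont \<Phi> \<and> (\<forall>n\<ge>1. z n = real n powr log 2 s * \<Phi> (frac (log 2 (real n))))"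
proof -
  obtain \<Phi> where "periodic1_cont \<Phi>" "\<forall>y>0. extension y = y powr log 2 s * \<Phi> (frac (log 2 y))"
    using homogeneous_periodic_factor[OF s_pos isCont_extension extension_double] by blast
  moreover have "0 < real n" if "1 \<le> n" for n using that by simp
  ultimately show ?thesis using extension_nat by metis
qed

end

section \<open>Perturbed doubling recurrences\<close>

locale perturbed_doubling =
  fixes \<alpha> \<beta> q C :: real and z h :: "nat \<Rightarrow> real"
  assumes alpha_pos: "0 < \<alpha>" and beta_pos: "0 < \<beta>" and q_nonneg: "0 \<le> q"
    and even: "\<And>m. 1 \<le> m \<Longrightarrow> z (2 * m) = (\<alpha> + \<beta>) * z m"
    and odd: "\<And>m. 1 \<le> m \<Longrightarrow> z (Suc (2 * m)) = \<alpha> * z m + \<beta> * z (Suc m) + h m"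
    and perturbation: "\<And>m. 1 \<le> m \<Longrightarrow> \<bar>h m\<bar> \<le> C * real (Suc m) powr q"
begin

lemma C_nonneg: "0 \<le> C"
proof -
  have "0 \<le> C * 2 powr q" using perturbation[of 1] abs_ge_zero[of "h 1"] by simp
  then show ?thesis by (simp add: zero_le_mult_iff)
qed

lemma perturbation_le:
  assumes "1 \<le> m" "Suc m \<le> n" "q \<le> r" shows "\<bar>h m\<bar> \<le> C * real n powr r"
proof -
  have "real (Suc m) powr q \<le> real n powr q" using assms q_nonneg by (intro powr_mono2) auto
  also have "\<dots> \<le> real n powr r" using assms by (intro powr_mono) auto
  finally show ?thesis using perturbation[OF assms(1)] C_nonneg
    by (meson mult_left_mono order.trans)
qed

lemma increment_bound:
  assumes r: "max \<alpha> \<beta> < 2 powr r" "q \<le> r"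
  shows "\<exists>K. \<forall>n\<ge>1. \<bar>z (Suc n) - z n\<bar> \<le> K * real n powr r"
proof (rule halving_recurrence_bound[OF _ r(1) C_nonneg])
  show "0 \<le> max \<alpha> \<beta>" "0 \<le> r" using alpha_pos q_nonneg r(2) by auto
  fix n :: nat assume n: "2 \<le> n"
  define m where "m = n div 2"
  have m: "1 \<le> m" "Suc m \<le> n" using n unfolding m_def by auto
  have h: "\<bar>h m\<bar> \<le> C * real n powr r" using perturbation_le[OF m r(2)] .
  consider "n = 2 * m" | "n = Suc (2 * m)" unfolding m_def by linarith
  then have "\<bar>z (Suc n) - z n\<bar> \<le> max \<alpha> \<beta> * \<bar>z (Suc m) - z m\<bar> + \<bar>h m\<bar>"
  proof cases
    case 1
    then have "z (Suc n) - z n = \<beta> * (z (Suc m) - z m) + h m"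
      using even[OF m(1)] odd[OF m(1)] by (simp add: algebra_simps)
    then have "\<bar>z (Suc n) - z n\<bar> \<le> \<beta> * \<bar>z (Suc m) - z m\<bar> + \<bar>h m\<bar>"
      using abs_triangle_ineq[of "\<beta> * (z (Suc m) - z m)" "h m"] beta_pos by (simp add: abs_mult)
    then show ?thesis
      using mult_right_mono[OF max.cobounded2[of \<beta> \<alpha>] abs_ge_zero[of "z (Suc m) - z m"]]
      by (simp add: max.commute)
  next
    case 2
    then have "z (Suc n) - z n = \<alpha> * (z (Suc m) - z m) - h m"
      using even[of "Suc m"] odd[OF m(1)] by (simp add: algebra_simps)
    then have "\<bar>z (Suc n) - z n\<bar> \<le> \<alpha> * \<bar>z (Suc m) - z m\<bar> + \<bar>h m\<bar>"
      using abs_triangle_ineq4[of "\<alpha> * (z (Suc m) - z m)" "h m"] alpha_pos by (simp add: abs_mult)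
    then show ?thesis
      using mult_right_mono[OF max.cobounded1[of \<alpha> \<beta>] abs_ge_zero[of "z (Suc m) - z m"]]
      by simp
  qed
  then show "\<bar>z (Suc n) - z n\<bar> \<le> max \<alpha> \<beta> * \<bar>z (Suc (n div 2)) - z (n div 2)\<bar> + C * real n powr r"
    using h unfolding m_def by linarith
qed

lemma homogeneous_representation:
  assumes q: "2 powr q < \<alpha> + \<beta>"
  shows "\<exists>\<Phi>. periodic1_cont \<Phi> \<and>
    (\<forall>n\<ge>1. z n = real n powr log 2 (\<alpha> + \<beta>) * \<Phi> (frac (log 2 (real n))))"
proof -
  \<comment> \<open>The increments grow at most like \<open>n^(log\<^sub>2 (max \<alpha> \<beta>))\<close> plus the defect; any
      \<open>r\<close> above both exponents and below \<open>log\<^sub>2 (\<alpha> + \<beta>)\<close> makes the rescaling converge.\<close>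
  have "max q (log 2 (max \<alpha> \<beta>)) < log 2 (\<alpha> + \<beta>)"
    using alpha_pos beta_pos q by (simp add: less_log_iff)
  then obtain r where r: "max q (log 2 (max \<alpha> \<beta>)) < r" "r < log 2 (\<alpha> + \<beta>)"
    using dense by blast
  have "max \<alpha> \<beta> < 2 powr r" "2 powr r < \<alpha> + \<beta>"
    using r alpha_pos beta_pos by (simp_all add: log_less_iff less_log_iff)
  then obtain K where "\<forall>n\<ge>1. \<bar>z (Suc n) - z n\<bar> \<le> K * real n powr r"
    using increment_bound r(1) by force
  then interpret doubling_sequence "\<alpha> + \<beta>" r K z
    using \<open>2 powr r < \<alpha> + \<beta>\<close> r(1) q_nonneg even by unfold_locales auto
  show ?thesis by (rule periodic_representation)
qed

lemma log_growth:
  assumes q: "\<alpha> + \<beta> \<le> 2 powr q"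
  shows "\<exists>K. \<forall>n\<ge>1. \<bar>z n\<bar> \<le> K * real n powr q * (log 2 (real n) + 1)"
proof -
  have "max \<alpha> \<beta> < 2 powr q" using q alpha_pos beta_pos by linarith
  then obtain K where K: "\<And>n. 1 \<le> n \<Longrightarrow> \<bar>z (Suc n) - z n\<bar> \<le> K * real n powr q"
    using increment_bound by blast
  have K0: "0 \<le> K" using K[of 1] abs_ge_zero[of "z 2 - z 1"] by simp
  show ?thesis
  proof (rule halving_recurrence_bound_log[OF _ q _ q_nonneg])
    show "0 \<le> \<alpha> + \<beta>" "0 \<le> \<beta> * K + C" using alpha_pos beta_pos K0 C_nonneg by auto
    fix n :: nat assume n: "2 \<le> n"
    define m where "m = n div 2"
    have m: "1 \<le> m" "Suc m \<le> n" using n unfolding m_def by auto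
    have "real m powr q \<le> real n powr q" using m q_nonneg by (intro powr_mono2) auto
    then have "\<beta> * \<bar>z (Suc m) - z m\<bar> \<le> \<beta> * K * real n powr q"
      using K[OF m(1)] K0 beta_pos
      by (metis mult.assoc mult_left_mono order.trans less_imp_le)
    moreover have "\<bar>h m\<bar> \<le> C * real n powr q" using perturbation_le[OF m] by simp
    moreover consider "n = 2 * m" | "n = Suc (2 * m)" unfolding m_def by linarith
    then have "\<bar>z n\<bar> \<le> (\<alpha> + \<beta>) * \<bar>z m\<bar> + \<beta> * \<bar>z (Suc m) - z m\<bar> + \<bar>h m\<bar>"
    proof cases
      case 1
      then show ?thesis using even[OF m(1)] alpha_pos beta_pos by (simp add: abs_mult)
    next
      case 2
      then have "z n = (\<alpha> + \<beta>) * z m + \<beta> * (z (Suc m) - z m) + h m"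
        using odd[OF m(1)] by (simp add: algebra_simps)
      then have "\<bar>z n\<bar> \<le> \<bar>(\<alpha> + \<beta>) * z m\<bar> + \<bar>\<beta> * (z (Suc m) - z m)\<bar> + \<bar>h m\<bar>"
        by (metis abs_triangle_ineq add_right_mono order.trans)
      then show ?thesis using alpha_pos beta_pos by (simp add: abs_mult)
    qed
    ultimately show "\<bar>z n\<bar> \<le> (\<alpha> + \<beta>) * \<bar>z (n div 2)\<bar> + (\<beta> * K + C) * real n powr q"
      unfolding m_def by (simp add: distrib_right)
  qed
qed

end

section \<open>Particular solutions for polynomial forcing\<close>

text \<open>
  A solution of \<open>u(2y) = s u(y) + (2y)^i\<close>: the multiple \<open>2^i / (2^i - s)\<close> of \<open>y^i\<close>
  away from resonance, and \<open>y^i log\<^sub>2 y\<close> at the resonance \<open>2^i = s\<close>.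
\<close>
definition monomial_solution :: "real \<Rightarrow> nat \<Rightarrow> real \<Rightarrow> real" where
  "monomial_solution s i y = (if 2^i = s then y^i * log 2 y else 2^i / (2^i - s) * y^i)"

lemma monomial_solution_double:
  assumes "0 < y"
  shows "monomial_solution s i (2 * y) = s * monomial_solution s i y + (2 * y)^i"
proof (cases "2^i = s")
  case True
  then show ?thesis using assms
    by (simp add: monomial_solution_def log_mult power_mult_distrib algebra_simps)
next
  case False
  then have "(2::real)^i - s \<noteq> 0" by simp
  then show ?thesis using False
    by (simp add: monomial_solution_def power_mult_distrib field_simps)
qed

lemma monomial_solution_nonresonant:
  "2^i \<noteq> s \<Longrightarrow> monomial_solution s i y = 2^i / (2^i - s) * y^i"
  by (simp add: monomial_solution_def)

lemma monomial_solution_bigo: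
  assumes "i < K" "2^i \<noteq> s"
  shows "(\<lambda>n. monomial_solution s i (real n)) \<in> O(\<lambda>n. real n ^ (K - 1))"
proof (rule bigoI[where c = "\<bar>2^i / (2^i - s)\<bar>"])
  show "\<forall>\<^sub>F n in sequentially. norm (monomial_solution s i (real n))
      \<le> \<bar>2^i / (2^i - s)\<bar> * norm (real n ^ (K - 1))"
    using eventually_ge_at_top[of 1]
  proof eventually_elim
    case (elim n)
    then have "real n ^ i \<le> real n ^ (K - 1)" using assms by (intro power_increasing) auto
    then show ?case using assms
      by (simp add: monomial_solution_def abs_mult) (auto intro!: divide_right_mono mult_left_mono)
  qed
qed

lemma monomial_solution_bigo_ln:
  assumes "i < K"
  shows "(\<lambda>n. monomial_solution s i (real n)) \<in> O(\<lambda>n. real n ^ (K - 1) * ln (real n))"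
proof (cases "2^i = s")
  case True
  show ?thesis
  proof (rule bigoI[where c = "1 / ln 2"])
    show "\<forall>\<^sub>F n in sequentially. norm (monomial_solution s i (real n))
        \<le> 1 / ln 2 * norm (real n ^ (K - 1) * ln (real n))"
      using eventually_ge_at_top[of 1]
    proof eventually_elim
      case (elim n)
      then have "real n ^ i * ln (real n) \<le> real n ^ (K - 1) * ln (real n)"
        using assms by (intro mult_right_mono power_increasing) auto
      then show ?case using True elim
        by (simp add: monomial_solution_def log_def abs_mult divide_right_mono)
    qed
  qed
next
  case False
  then show ?thesis
    using bigo_mult_ln_power[OF monomial_solution_bigo[OF assms False], where E = 1] by simp
qed

definition lipschitz_growth :: "real \<Rightarrow> (real \<Rightarrow> real) \<Rightarrow> bool" where
  "lipschitz_growth q f \<longleftrightarrow>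
     (\<exists>L. \<forall>M\<ge>1. \<forall>u\<in>{1..M}. \<forall>v\<in>{1..M}. \<bar>f u - f v\<bar> \<le> L * M powr q * \<bar>u - v\<bar>)"

lemma lipschitz_growth_add:
  assumes "lipschitz_growth q f" "lipschitz_growth q g"
  shows "lipschitz_growth q (\<lambda>y. f y + g y)"
proof -
  obtain L1 L2 where L:
    "\<And>M u v. 1 \<le> M \<Longrightarrow> u \<in> {1..M} \<Longrightarrow> v \<in> {1..M} \<Longrightarrow> \<bar>f u - f v\<bar> \<le> L1 * M powr q * \<bar>u - v\<bar>"
    "\<And>M u v. 1 \<le> M \<Longrightarrow> u \<in> {1..M} \<Longrightarrow> v \<in> {1..M} \<Longrightarrow> \<bar>g u - g v\<bar> \<le> L2 * M powr q * \<bar>u - v\<bar>"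
    using assms unfolding lipschitz_growth_def by metis
  show ?thesis
    unfolding lipschitz_growth_def
  proof (intro exI allI impI ballI)
    fix M u v :: real assume uv: "1 \<le> M" "u \<in> {1..M}" "v \<in> {1..M}"
    have "\<bar>(f u + g u) - (f v + g v)\<bar> \<le> \<bar>f u - f v\<bar> + \<bar>g u - g v\<bar>" by linarith
    also have "\<dots> \<le> (L1 + L2) * M powr q * \<bar>u - v\<bar>"
      using L(1)[OF uv] L(2)[OF uv] by (simp add: distrib_right)
    finally show "\<bar>(f u + g u) - (f v + g v)\<bar> \<le> (L1 + L2) * M powr q * \<bar>u - v\<bar>" .
  qed
qed

lemma lipschitz_growth_cmult:
  assumes "lipschitz_growth q f" shows "lipschitz_growth q (\<lambda>y. c * f y)"
proof -
  obtain L where "\<forall>M\<ge>1. \<forall>u\<in>{1..M}. \<forall>v\<in>{1..M}. \<bar>f u - f v\<bar> \<le> L * M powr q * \<bar>u - v\<bar>"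
    using assms unfolding lipschitz_growth_def by blast
  then have "\<forall>M\<ge>1. \<forall>u\<in>{1..M}. \<forall>v\<in>{1..M}. \<bar>c * f u - c * f v\<bar> \<le> (\<bar>c\<bar> * L) * M powr q * \<bar>u - v\<bar>"
    by (auto simp: right_diff_distrib[symmetric] abs_mult mult.assoc intro: mult_left_mono)
  then show ?thesis unfolding lipschitz_growth_def by blast
qed

lemma lipschitz_growth_sum:
  assumes "\<And>i. i \<in> A \<Longrightarrow> lipschitz_growth q (f i)"
  shows "lipschitz_growth q (\<lambda>y. \<Sum>i\<in>A. f i y)"
  using assms
proof (induction A rule: infinite_finite_induct)
  case (insert i A)
  then show ?case by (simp add: lipschitz_growth_add)
qed (auto simp: lipschitz_growth_def intro: exI[of _ 0])

lemma lipschitz_growthI_deriv: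
  assumes q: "0 \<le> q"
    and deriv: "\<And>t. 1 \<le> t \<Longrightarrow> (f has_real_derivative f' t) (at t)"
    and bound: "\<And>t. 1 \<le> t \<Longrightarrow> \<bar>f' t\<bar> \<le> L * t powr q"
  shows "lipschitz_growth q f"
  unfolding lipschitz_growth_def
proof (intro exI allI impI ballI)
  fix M u v :: real assume "1 \<le> M" "u \<in> {1..M}" "v \<in> {1..M}"
  have "\<bar>f' t\<bar> \<le> \<bar>L\<bar> * M powr q" if "t \<in> {1..M}" for t
  proof -
    have "L * t powr q \<le> \<bar>L\<bar> * t powr q" by (intro mult_right_mono) auto
    also have "\<dots> \<le> \<bar>L\<bar> * M powr q" using that q by (intro mult_left_mono powr_mono2) auto
    finally show ?thesis using bound[of t] that by simp
  qed
  then show "\<bar>f u - f v\<bar> \<le> \<bar>L\<bar> * M powr q * \<bar>u - v\<bar>"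
    using field_differentiable_bound[of "{1..M}" f f' "\<bar>L\<bar> * M powr q" u v]
      deriv \<open>u \<in> {1..M}\<close> \<open>v \<in> {1..M}\<close>
    by (auto intro: has_field_derivative_at_within)
qed

lemma lipschitz_growth_power:
  assumes q: "0 \<le> q" "real i \<le> q + 1"
  shows "lipschitz_growth q (\<lambda>y. y^i)"
proof (rule lipschitz_growthI_deriv[OF q(1)])
  fix t :: real assume t: "1 \<le> t"
  show "((\<lambda>y. y^i) has_real_derivative real i * t^(i - 1)) (at t)"
    by (auto intro!: derivative_eq_intros)
  have "t^(i - 1) = t powr real (i - 1)" using t by (simp add: powr_realpow)
  also have "\<dots> \<le> t powr q" using t q by (intro powr_mono) (auto simp: of_nat_diff)
  finally show "\<bar>real i * t^(i - 1)\<bar> \<le> real i * t powr q"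
    using t by (simp add: mult_left_mono)
qed

lemma lipschitz_growth_power_log:
  assumes q: "0 \<le> q" "real i < q + 1"
  shows "lipschitz_growth q (\<lambda>y. y^i * log 2 y)"
proof (rule lipschitz_growthI_deriv[OF q(1)])
  define \<delta> where "\<delta> = q + 1 - real i"
  have \<delta>: "0 < \<delta>" using q by (simp add: \<delta>_def)
  fix t :: real assume t: "1 \<le> t"
  have "((\<lambda>y. y^i * log 2 y) has_real_derivative
      real i * t^(i - Suc 0) * log 2 t + 1 / (ln 2 * t) * t^i) (at t)"
    using t by (intro DERIV_mult DERIV_pow DERIV_log) auto
  moreover have "real i * t^(i - Suc 0) = real i * (t^i / t)" using t by (cases i) auto
  ultimately show "((\<lambda>y. y^i * log 2 y) has_real_derivative
      t^i / t * (real i * log 2 t + 1 / ln 2)) (at t)"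
    using t by (simp add: field_simps)
  have "t^i / t = t powr (real i - 1)" using t by (simp add: powr_diff powr_realpow)
  moreover have "0 \<le> real i * log 2 t + 1 / ln 2" using t by simp
  ultimately have "\<bar>t^i / t * (real i * log 2 t + 1 / ln 2)\<bar>
      = t powr (real i - 1) * (real i * log 2 t + 1 / ln 2)"
    by (simp add: abs_mult)
  also have "\<dots> \<le> t powr (real i - 1) * ((real i / \<delta> + 1) / ln 2 * t powr \<delta>)"
  proof (rule mult_left_mono)
    have "real i * log 2 t \<le> real i * (t powr \<delta> / (\<delta> * ln 2))"
      using log_le_powr_div[OF t \<delta>] by (intro mult_left_mono) auto
    moreover have "1 / ln 2 \<le> t powr \<delta> / ln 2"
      using t \<delta> by (intro divide_right_mono) (auto simp: ge_one_powr_ge_zero)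
    ultimately have "real i * log 2 t + 1 / ln 2
        \<le> real i * (t powr \<delta> / (\<delta> * ln 2)) + t powr \<delta> / ln 2"
      by (rule add_mono)
    also have "\<dots> = (real i / \<delta> + 1) / ln 2 * t powr \<delta>" using \<delta> by (simp add: field_simps)
    finally show "real i * log 2 t + 1 / ln 2 \<le> (real i / \<delta> + 1) / ln 2 * t powr \<delta>" .
  qed simp
  also have "\<dots> = (real i / \<delta> + 1) / ln 2 * t powr q"
    using t by (simp add: \<delta>_def powr_add[symmetric])
  finally show "\<bar>t^i / t * (real i * log 2 t + 1 / ln 2)\<bar> \<le> (real i / \<delta> + 1) / ln 2 * t powr q" .
qed

lemma lipschitz_growth_monomial_solution:
  assumes q: "0 \<le> q" "real i \<le> q + 1" and resonant: "2^i = s \<Longrightarrow> real i < q + 1"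
  shows "lipschitz_growth q (monomial_solution s i)"
proof (cases "2^i = s")
  case True
  then have "monomial_solution s i = (\<lambda>y. y^i * log 2 y)"
    by (simp add: monomial_solution_def fun_eq_iff)
  then show ?thesis using lipschitz_growth_power_log[OF q(1) resonant[OF True]] by simp
next
  case False
  then have "monomial_solution s i = (\<lambda>y. 2^i / (2^i - s) * y^i)"
    by (simp add: monomial_solution_def fun_eq_iff)
  then show ?thesis
    using lipschitz_growth_cmult[OF lipschitz_growth_power[OF q], of "2^i / (2^i - s)"] by simp
qed

lemma lipschitz_growth_midpoint_defect:
  assumes f: "lipschitz_growth q f" and ab: "0 \<le> \<alpha>" "0 \<le> \<beta>"
  shows "\<exists>C. \<forall>m\<ge>1. \<bar>\<alpha> * f (real m) + \<beta> * f (real m + 1) - (\<alpha> + \<beta>) * f (real m + 1 / 2)\<bar>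
    \<le> C * real (Suc m) powr q"
proof -
  obtain L where L: "\<And>M u v. 1 \<le> M \<Longrightarrow> u \<in> {1..M} \<Longrightarrow> v \<in> {1..M} \<Longrightarrow>
      \<bar>f u - f v\<bar> \<le> L * M powr q * \<bar>u - v\<bar>"
    using f unfolding lipschitz_growth_def by blast
  have "\<bar>\<alpha> * f (real m) + \<beta> * f (real m + 1) - (\<alpha> + \<beta>) * f (real m + 1 / 2)\<bar>
      \<le> (\<alpha> + \<beta>) * L / 2 * real (Suc m) powr q" if "1 \<le> m" for m
  proof -
    define M where "M = real m + 1"
    define a b where "a = f (real m) - f (real m + 1 / 2)" and "b = f (real m + 1) - f (real m + 1 / 2)"
    have "\<bar>a\<bar> \<le> L * M powr q / 2" "\<bar>b\<bar> \<le> L * M powr q / 2"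
      using L[of M "real m" "real m + 1 / 2"] L[of M "real m + 1" "real m + 1 / 2"] that
      by (simp_all add: M_def a_def b_def)
    then have "\<alpha> * \<bar>a\<bar> \<le> \<alpha> * (L * M powr q / 2)" "\<beta> * \<bar>b\<bar> \<le> \<beta> * (L * M powr q / 2)"
      using ab by (intro mult_left_mono; simp)+
    moreover have "\<bar>\<alpha> * a + \<beta> * b\<bar> \<le> \<alpha> * \<bar>a\<bar> + \<beta> * \<bar>b\<bar>"
      using ab abs_triangle_ineq[of "\<alpha> * a" "\<beta> * b"] by (simp add: abs_mult)
    ultimately have "\<bar>\<alpha> * a + \<beta> * b\<bar> \<le> (\<alpha> + \<beta>) * L / 2 * M powr q"
      by (simp add: field_simps)
    then show ?thesis by (simp add: M_def a_def b_def algebra_simps add.commute)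
  qed
  then show ?thesis by blast
qed

section \<open>The divide-and-conquer recurrence\<close>

locale halving_recurrence =
  fixes \<alpha> \<beta> :: real and g :: "real poly" and k :: nat and x :: "nat \<Rightarrow> real"
  assumes alpha_pos: "0 < \<alpha>" and beta_pos: "0 < \<beta>"
    and degree: "degree g = k" and k_pos: "1 \<le> k"
    and rec: "\<And>n. 2 \<le> n \<Longrightarrow> x n = \<alpha> * x (n div 2) + \<beta> * x ((n + 1) div 2) + poly g (real n)"
begin

lemma two_power_k: "(2::real)^k = 2 * 2^(k - 1)"
  using k_pos by (cases k) auto

definition lower_part :: "nat \<Rightarrow> real \<Rightarrow> real" where
  "lower_part K y = (\<Sum>i<K. coeff g i * monomial_solution (\<alpha> + \<beta>) i y)"

definition particular :: "real \<Rightarrow> real" where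
  "particular = lower_part (Suc k)"

lemma particular_double:
  assumes "0 < y" shows "particular (2 * y) = (\<alpha> + \<beta>) * particular y + poly g (2 * y)"
proof -
  have "poly g (2 * y) = (\<Sum>i<Suc k. coeff g i * (2 * y)^i)"
    by (simp add: poly_altdef degree lessThan_Suc_atMost)
  then show ?thesis using monomial_solution_double[OF assms]
    by (simp add: particular_def lower_part_def sum_distrib_left sum.distrib[symmetric]
        algebra_simps)
qed

lemma particular_split:
  "particular y = lower_part k y + coeff g k * monomial_solution (\<alpha> + \<beta>) k y"
  by (simp add: particular_def lower_part_def)

definition remainder :: "nat \<Rightarrow> real" where
  "remainder n = x n - particular (real n)"

definition defect :: "nat \<Rightarrow> real" where
  "defect m = \<alpha> * particular (real m) + \<beta> * particular (real m + 1)
    - (\<alpha> + \<beta>) * particular (real m + 1 / 2)"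

lemma lower_part_bigo:
  assumes "\<And>i. i < K \<Longrightarrow> 2^i \<noteq> \<alpha> + \<beta>"
  shows "(\<lambda>n. lower_part K (real n)) \<in> O(\<lambda>n. real n ^ (K - 1))"
  unfolding lower_part_def
  by (intro big_sum_in_bigo bigo_cmult monomial_solution_bigo) (use assms in auto)

lemma lower_part_bigo_ln: "(\<lambda>n. lower_part K (real n)) \<in> O(\<lambda>n. real n ^ (K - 1) * ln (real n))"
  unfolding lower_part_def
  by (intro big_sum_in_bigo bigo_cmult monomial_solution_bigo_ln) auto

lemma lipschitz_growth_particular:
  assumes "0 \<le> q" "real k \<le> q + 1" "2^k = \<alpha> + \<beta> \<Longrightarrow> real k < q + 1"
  shows "lipschitz_growth q particular"
  unfolding particular_def lower_part_def
proof (intro lipschitz_growth_sum lipschitz_growth_cmult lipschitz_growth_monomial_solution)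
  fix i assume "i \<in> {..<Suc k}"
  then show "real i \<le> q + 1" "2^i = \<alpha> + \<beta> \<Longrightarrow> real i < q + 1"
    using assms by (auto simp: less_Suc_eq)
qed (use assms in simp)

lemma remainder_perturbed_doubling:
  assumes q: "0 \<le> q" "lipschitz_growth q particular"
  shows "\<exists>C. perturbed_doubling \<alpha> \<beta> q C remainder defect"
proof -
  obtain C where C: "\<forall>m\<ge>1. \<bar>defect m\<bar> \<le> C * real (Suc m) powr q"
    using lipschitz_growth_midpoint_defect[OF q(2)] alpha_pos beta_pos
    unfolding defect_def by fastforce
  have "perturbed_doubling \<alpha> \<beta> q C remainder defect"
  proof
    fix m :: nat assume m: "1 \<le> m"
    have "particular (real (2 * m)) = (\<alpha> + \<beta>) * particular (real m) + poly g (real (2 * m))"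
      using particular_double[of "real m"] m by simp
    then show "remainder (2 * m) = (\<alpha> + \<beta>) * remainder m"
      using rec[of "2 * m"] m by (simp add: remainder_def algebra_simps)
    have "particular (real (Suc (2 * m)))
        = (\<alpha> + \<beta>) * particular (real m + 1 / 2) + poly g (real (Suc (2 * m)))"
      using particular_double[of "real m + 1 / 2"] by (simp add: algebra_simps)
    then show "remainder (Suc (2 * m)) = \<alpha> * remainder m + \<beta> * remainder (Suc m) + defect m"
      using rec[of "Suc (2 * m)"] m by (simp add: remainder_def defect_def algebra_simps)
  qed (use alpha_pos beta_pos q C in auto)
  then show ?thesis by blast
qed

lemma remainder_representation:
  assumes s: "2^(k - 1) < \<alpha> + \<beta>"
  shows "\<exists>\<Phi>. periodic1_cont \<Phi> \<and>
    (\<forall>n\<ge>1. x n = particular (real n) + real n powr log 2 (\<alpha> + \<beta>) * \<Phi> (frac (log 2 (real n))))"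
proof -
  \<comment> \<open>At resonance the term \<open>n^k log n\<close> of the particular solution costs half a power.\<close>
  define q where "q = (if 2^k = \<alpha> + \<beta> then real k - 1 / 2 else real k - 1)"
  have q: "0 \<le> q" "real k \<le> q + 1" "2^k = \<alpha> + \<beta> \<Longrightarrow> real k < q + 1"
    using k_pos by (auto simp: q_def)
  have "2 powr q < \<alpha> + \<beta>"
  proof (cases "2^k = \<alpha> + \<beta>")
    case True
    have "2 powr q < 2 powr real k" by (simp add: q_def True)
    then show ?thesis using True by (simp add: powr_realpow)
  next
    case False
    then have "q = real (k - 1)" using k_pos by (simp add: q_def of_nat_diff)
    then show ?thesis using s by (simp add: powr_realpow)
  qed
  obtain C where "perturbed_doubling \<alpha> \<beta> q C remainder defect"
    using remainder_perturbed_doubling[OF q(1) lipschitz_growth_particular[OF q]] by blast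
  from perturbed_doubling.homogeneous_representation[OF this \<open>2 powr q < \<alpha> + \<beta>\<close>]
  show ?thesis by (simp add: remainder_def diff_eq_eq add.commute)
qed

lemma remainder_bigo:
  assumes s: "\<alpha> + \<beta> \<le> 2^(k - 1)"
  shows "remainder \<in> O(\<lambda>n. real n ^ (k - 1) * ln (real n))"
proof -
  define q where "q = real (k - 1)"
  have "\<alpha> + \<beta> < 2^k" using s two_power_k zero_less_power[of "2::real" "k - 1"] by linarith
  then have q: "0 \<le> q" "real k \<le> q + 1" "2^k = \<alpha> + \<beta> \<Longrightarrow> real k < q + 1"
    using k_pos by (auto simp: q_def)
  obtain C where "perturbed_doubling \<alpha> \<beta> q C remainder defect"
    using remainder_perturbed_doubling[OF q(1) lipschitz_growth_particular[OF q]] by blast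
  from perturbed_doubling.log_growth[OF this] s
  obtain K where K: "\<And>n. 1 \<le> n \<Longrightarrow> \<bar>remainder n\<bar> \<le> K * real n ^ (k - 1) * (log 2 (real n) + 1)"
    by (auto simp: q_def powr_realpow)
  show ?thesis
  proof (rule bigoI[where c = "3 * \<bar>K\<bar>"])
    show "\<forall>\<^sub>F n in sequentially. norm (remainder n)
        \<le> 3 * \<bar>K\<bar> * norm (real n ^ (k - 1) * ln (real n))"
      using eventually_ge_at_top[of 3]
    proof eventually_elim
      case (elim n)
      have ln: "1 \<le> ln (real n)" using ln_ge_one[OF elim] .
      have "ln (real n) * (2 / 3) \<le> ln (real n) * ln 2"
        using ln ln2_ge_two_thirds by (intro mult_left_mono) auto
      then have "ln (real n) + ln 2 \<le> 3 * (ln (real n) * ln 2)" using ln ln_2_less_1 by linarith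
      then have "log 2 (real n) + 1 \<le> 3 * ln (real n)" by (simp add: log_def field_simps)
      then have "K * real n ^ (k - 1) * (log 2 (real n) + 1) \<le> \<bar>K\<bar> * real n ^ (k - 1) * (3 * ln (real n))"
        using ln elim by (intro mult_mono) auto
      also have "\<dots> = 3 * \<bar>K\<bar> * norm (real n ^ (k - 1) * ln (real n))"
        using ln by (simp add: abs_mult)
      finally have "K * real n ^ (k - 1) * (log 2 (real n) + 1)
          \<le> 3 * \<bar>K\<bar> * norm (real n ^ (k - 1) * ln (real n))" .
      then show ?case using K[of n] elim unfolding real_norm_def by linarith
    qed
  qed
qed

lemma expansion_homogeneous_dominant:
  assumes s: "2^k < \<alpha> + \<beta>" and \<mu>: "max \<alpha> \<beta> < 2^k"
  shows "\<exists>\<Phi> \<Psi>. periodic1_cont \<Phi> \<and> periodic1_cont \<Psi> \<and>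
    (\<lambda>n. x n - real n powr log 2 (\<alpha> + \<beta>) * \<Phi> (frac (log 2 (real n)))
       - real n ^ k * \<Psi> (frac (log 2 (real n)))) \<in> O(\<lambda>n. real n powr log 2 (max \<alpha> \<beta>))"
proof -
  have nonres: "2^i < \<alpha> + \<beta>" if "i \<le> k" for i
    using s power_increasing[OF that, of "2::real"] by linarith
  obtain \<Phi> where \<Phi>: "periodic1_cont \<Phi>" and x: "\<And>n. 1 \<le> n \<Longrightarrow>
      x n = particular (real n) + real n powr log 2 (\<alpha> + \<beta>) * \<Phi> (frac (log 2 (real n)))"
    using remainder_representation[OF nonres[of "k - 1"]] by auto
  have "(\<lambda>n. lower_part k (real n)) \<in> O(\<lambda>n. real n ^ (k - 1))"
    using nonres by (intro lower_part_bigo) (metis less_imp_le order_less_irrefl)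
  moreover have "real (k - 1) \<le> log 2 (max \<alpha> \<beta>)"
    using s two_power_k by (intro real_le_log2_of_power_le) linarith
  ultimately have "(\<lambda>n. lower_part k (real n)) \<in> O(\<lambda>n. real n powr log 2 (max \<alpha> \<beta>))"
    using landau_o.big_trans power_bigo_powr by blast
  moreover have "x n - real n powr log 2 (\<alpha> + \<beta>) * \<Phi> (frac (log 2 (real n)))
      - real n ^ k * (coeff g k * (2^k / (2^k - (\<alpha> + \<beta>)))) = lower_part k (real n)"
    if "1 \<le> n" for n
    using x[OF that] nonres[of k] by (simp add: particular_split monomial_solution_nonresonant)
  ultimately have "(\<lambda>n. x n - real n powr log 2 (\<alpha> + \<beta>) * \<Phi> (frac (log 2 (real n)))
      - real n ^ k * (coeff g k * (2^k / (2^k - (\<alpha> + \<beta>)))))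
      \<in> O(\<lambda>n. real n powr log 2 (max \<alpha> \<beta>))"
    by (rule bigo_cong_ge_1[where g = "\<lambda>n. lower_part k (real n)"])
  then show ?thesis
    using \<Phi> periodic1_cont_const[of "coeff g k * (2^k / (2^k - (\<alpha> + \<beta>)))"] by blast
qed

lemma expansion_homogeneous_only:
  assumes s: "2^k < \<alpha> + \<beta>" and \<mu>: "2^k \<le> max \<alpha> \<beta>"
  shows "\<exists>\<Phi>. periodic1_cont \<Phi> \<and>
    (\<lambda>n. x n - real n powr log 2 (\<alpha> + \<beta>) * \<Phi> (frac (log 2 (real n))))
      \<in> O(\<lambda>n. real n powr log 2 (max \<alpha> \<beta>) * ln (real n) ^ iverson (max \<alpha> \<beta> = 2^k))"
proof -
  have nonres: "2^i < \<alpha> + \<beta>" if "i \<le> k" for i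
    using s power_increasing[OF that, of "2::real"] by linarith
  obtain \<Phi> where \<Phi>: "periodic1_cont \<Phi>" and x: "\<And>n. 1 \<le> n \<Longrightarrow>
      x n = particular (real n) + real n powr log 2 (\<alpha> + \<beta>) * \<Phi> (frac (log 2 (real n)))"
    using remainder_representation[OF nonres[of "k - 1"]] by auto
  have "(\<lambda>n. lower_part (Suc k) (real n)) \<in> O(\<lambda>n. real n ^ (Suc k - 1))"
    using nonres by (intro lower_part_bigo) (metis less_Suc_eq_le order_less_irrefl)
  then have "(\<lambda>n. lower_part (Suc k) (real n)) \<in> O(\<lambda>n. real n ^ k)" by simp
  moreover have "real k \<le> log 2 (max \<alpha> \<beta>)" using \<mu> by (rule real_le_log2_of_power_le)
  ultimately have "(\<lambda>n. lower_part (Suc k) (real n)) \<in> O(\<lambda>n. real n powr log 2 (max \<alpha> \<beta>))"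
    using landau_o.big_trans power_bigo_powr by blast
  then have "(\<lambda>n. x n - real n powr log 2 (\<alpha> + \<beta>) * \<Phi> (frac (log 2 (real n))))
      \<in> O(\<lambda>n. real n powr log 2 (max \<alpha> \<beta>) * ln (real n) ^ iverson (max \<alpha> \<beta> = 2^k))"
    by (rule bigo_mult_ln_power[OF bigo_cong_ge_1]) (simp add: x particular_def)
  with \<Phi> show ?thesis by blast
qed

lemma expansion_critical:
  assumes s: "\<alpha> + \<beta> = 2^k"
  shows "\<exists>\<Phi> \<Psi>. periodic1_cont \<Phi> \<and> periodic1_cont \<Psi> \<and> (\<forall>\<epsilon>>0.
    (\<lambda>n. x n - real n ^ k * ln (real n) * \<Phi> (frac (log 2 (real n)))
       - real n ^ k * \<Psi> (frac (log 2 (real n))))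
      \<in> O(\<lambda>n. real n powr (log 2 (max \<alpha> \<beta>) + iverson (\<alpha> = \<beta>) * \<epsilon>)))"
proof -
  have nonres: "2^i < \<alpha> + \<beta>" if "i < k" for i
    using s power_strict_increasing[OF that, of "2::real"] by simp
  obtain \<Psi> where \<Psi>: "periodic1_cont \<Psi>" and x: "\<And>n. 1 \<le> n \<Longrightarrow>
      x n = particular (real n) + real n ^ k * \<Psi> (frac (log 2 (real n)))"
    using remainder_representation nonres[of "k - 1"] k_pos s by (auto simp: powr_realpow)
  have lower: "(\<lambda>n. lower_part k (real n)) \<in> O(\<lambda>n. real n ^ (k - 1))"
    using nonres by (intro lower_part_bigo) (metis order_less_irrefl)
  have eq: "x n - real n ^ k * ln (real n) * (coeff g k / ln 2) - real n ^ k * \<Psi> (frac (log 2 (real n)))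
      = lower_part k (real n)" if "1 \<le> n" for n
    using x[OF that] s by (simp add: particular_split monomial_solution_def log_def)
  have "real (k - 1) \<le> log 2 (max \<alpha> \<beta>)"
    using s two_power_k by (intro real_le_log2_of_power_le) linarith
  show ?thesis
  proof (intro exI conjI allI impI)
    show "periodic1_cont (\<lambda>_. coeff g k / ln 2)" by (rule periodic1_cont_const)
    show "periodic1_cont \<Psi>" by (rule \<Psi>)
    fix \<epsilon> :: real assume "0 < \<epsilon>"
    then have "0 \<le> iverson (\<alpha> = \<beta>) * \<epsilon>" by (intro mult_nonneg_nonneg iverson_nonneg) simp
    with \<open>real (k - 1) \<le> log 2 (max \<alpha> \<beta>)\<close>
    have "real (k - 1) \<le> log 2 (max \<alpha> \<beta>) + iverson (\<alpha> = \<beta>) * \<epsilon>" by linarith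
    from landau_o.big_trans[OF lower power_bigo_powr[OF this]]
    show "(\<lambda>n. x n - real n ^ k * ln (real n) * (coeff g k / ln 2)
        - real n ^ k * \<Psi> (frac (log 2 (real n))))
      \<in> O(\<lambda>n. real n powr (log 2 (max \<alpha> \<beta>) + iverson (\<alpha> = \<beta>) * \<epsilon>))"
      by (rule bigo_cong_ge_1) (rule eq)
  qed
qed

lemma expansion_forcing_dominant:
  assumes s: "\<alpha> + \<beta> < 2^k" "2^(k - 1) < \<alpha> + \<beta>"
  shows "\<exists>\<Phi> \<Psi>. periodic1_cont \<Phi> \<and> periodic1_cont \<Psi> \<and> (\<forall>\<epsilon>>0.
    (\<lambda>n. x n - real n ^ k * \<Phi> (frac (log 2 (real n)))
       - real n powr log 2 (\<alpha> + \<beta>) * \<Psi> (frac (log 2 (real n))))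
      \<in> O(\<lambda>n. real n powr (log 2 (max (max \<alpha> \<beta>) (2^(k - 1)))
           + iverson (max \<alpha> \<beta> = 2^(k - 1)) * \<epsilon>) * ln (real n) ^ iverson (max \<alpha> \<beta> < 2^(k - 1))))"
proof -
  have nonres: "2^i < \<alpha> + \<beta>" if "i < k" for i
    using s power_increasing[of i "k - 1" "2::real"] that by linarith
  obtain \<Psi> where \<Psi>: "periodic1_cont \<Psi>" and x: "\<And>n. 1 \<le> n \<Longrightarrow>
      x n = particular (real n) + real n powr log 2 (\<alpha> + \<beta>) * \<Psi> (frac (log 2 (real n)))"
    using remainder_representation[OF s(2)] by auto
  have lower: "(\<lambda>n. lower_part k (real n)) \<in> O(\<lambda>n. real n ^ (k - 1))"
    using nonres by (intro lower_part_bigo) (metis order_less_irrefl)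
  have eq: "x n - real n ^ k * (coeff g k * (2^k / (2^k - (\<alpha> + \<beta>))))
      - real n powr log 2 (\<alpha> + \<beta>) * \<Psi> (frac (log 2 (real n))) = lower_part k (real n)"
    if "1 \<le> n" for n
    using x[OF that] s by (simp add: particular_split monomial_solution_nonresonant)
  have "real (k - 1) \<le> log 2 (max (max \<alpha> \<beta>) (2^(k - 1)))"
    by (intro real_le_log2_of_power_le) simp
  show ?thesis
  proof (intro exI conjI allI impI)
    show "periodic1_cont (\<lambda>_. coeff g k * (2^k / (2^k - (\<alpha> + \<beta>))))"
      by (rule periodic1_cont_const)
    show "periodic1_cont \<Psi>" by (rule \<Psi>)
    fix \<epsilon> :: real assume "0 < \<epsilon>"
    then have "0 \<le> iverson (max \<alpha> \<beta> = 2^(k - 1)) * \<epsilon>"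
      by (intro mult_nonneg_nonneg iverson_nonneg) simp
    with \<open>real (k - 1) \<le> log 2 (max (max \<alpha> \<beta>) (2^(k - 1)))\<close>
    have "real (k - 1) \<le> log 2 (max (max \<alpha> \<beta>) (2^(k - 1))) + iverson (max \<alpha> \<beta> = 2^(k - 1)) * \<epsilon>"
      by linarith
    from bigo_mult_ln_power[OF landau_o.big_trans[OF lower power_bigo_powr[OF this]]]
    show "(\<lambda>n. x n - real n ^ k * (coeff g k * (2^k / (2^k - (\<alpha> + \<beta>))))
        - real n powr log 2 (\<alpha> + \<beta>) * \<Psi> (frac (log 2 (real n))))
      \<in> O(\<lambda>n. real n powr (log 2 (max (max \<alpha> \<beta>) (2^(k - 1)))
           + iverson (max \<alpha> \<beta> = 2^(k - 1)) * \<epsilon>) * ln (real n) ^ iverson (max \<alpha> \<beta> < 2^(k - 1)))"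
      by (rule bigo_cong_ge_1) (rule eq)
  qed
qed

lemma expansion_forcing_only:
  assumes s: "\<alpha> + \<beta> \<le> 2^(k - 1)"
  shows "\<exists>\<Phi>. periodic1_cont \<Phi> \<and>
    (\<lambda>n. x n - real n ^ k * \<Phi> (frac (log 2 (real n))))
      \<in> O(\<lambda>n. real n ^ (k - 1) * ln (real n) ^ Suc E)"
proof -
  have "\<alpha> + \<beta> < 2^k" using s two_power_k zero_less_power[of "2::real" "k - 1"] by linarith
  then have eq: "x n - real n ^ k * (coeff g k * (2^k / (2^k - (\<alpha> + \<beta>))))
      = remainder n + lower_part k (real n)" for n
    by (simp add: remainder_def particular_split monomial_solution_nonresonant)
  have "(\<lambda>n. x n - real n ^ k * (coeff g k * (2^k / (2^k - (\<alpha> + \<beta>)))))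
      \<in> O(\<lambda>n. real n ^ (k - 1) * ln (real n))"
    by (rule bigo_cong_ge_1[OF sum_in_bigo(1)[OF remainder_bigo[OF s] lower_part_bigo_ln]])
      (rule eq)
  from bigo_mult_ln_power[OF this, of E]
  have "(\<lambda>n. x n - real n ^ k * (coeff g k * (2^k / (2^k - (\<alpha> + \<beta>)))))
      \<in> O(\<lambda>n. real n ^ (k - 1) * ln (real n) ^ Suc E)"
    by (simp only: power_Suc mult.assoc)
  then show ?thesis
    using periodic1_cont_const[of "coeff g k * (2^k / (2^k - (\<alpha> + \<beta>)))"] by blast
qed

end

theorem mainTheorem4:
  fixes \<alpha> \<beta> :: real and g :: "real poly" and k :: nat and x :: "nat \<Rightarrow> real"
    and d0 d1 :: real
  assumes alpha_pos: "\<alpha> > 0" and beta_pos: "\<beta> > 0"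
    and deg: "degree g = k" and k_pos: "k \<ge> 1"
    and rec: "\<And>n. n \<ge> 2 \<Longrightarrow>
       x n = \<alpha> * x (n div 2) + \<beta> * x ((n + 1) div 2) + poly g (real n)"
    and d0_def: "d0 = (1 - \<beta>) * x 1 - poly g 1 + poly g 0"
    and d1_def: "d1 = poly g 1 - (1 - \<beta>) * x 1"
  shows
   "(\<alpha> + \<beta> > 2 ^ k \<and> 2 ^ k > max \<alpha> \<beta> \<longrightarrow>
      (\<exists>\<Phi> \<Psi>. periodic1_cont \<Phi> \<and> periodic1_cont \<Psi> \<and>
        (\<lambda>n. x n - real n powr log 2 (\<alpha> + \<beta>) * \<Phi> (frac (log 2 (real n)))
                 - real n ^ k * \<Psi> (frac (log 2 (real n))))
        \<in> O(\<lambda>n. real n powr log 2 (max \<alpha> \<beta>))))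
  \<and> (\<alpha> + \<beta> > 2 ^ k \<and> max \<alpha> \<beta> \<ge> 2 ^ k \<longrightarrow>
      (\<exists>\<Phi>. periodic1_cont \<Phi> \<and>
        (\<lambda>n. x n - real n powr log 2 (\<alpha> + \<beta>) * \<Phi> (frac (log 2 (real n))))
        \<in> O(\<lambda>n. real n powr log 2 (max \<alpha> \<beta>)
                  * ln (real n) ^ iverson (max \<alpha> \<beta> = 2 ^ k))))
  \<and> (\<alpha> + \<beta> = 2 ^ k \<longrightarrow>
      (\<exists>\<Phi> \<Psi>. periodic1_cont \<Phi> \<and> periodic1_cont \<Psi> \<and>
        (\<forall>\<epsilon>::real. \<epsilon> > 0 \<longrightarrow>
          (\<lambda>n. x n - real n ^ k * ln (real n) * \<Phi> (frac (log 2 (real n)))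
                   - real n ^ k * \<Psi> (frac (log 2 (real n))))
          \<in> O(\<lambda>n. real n powr (log 2 (max \<alpha> \<beta>) + iverson (\<alpha> = \<beta>) * \<epsilon>)))))
  \<and> (2 ^ k > \<alpha> + \<beta> \<and> \<alpha> + \<beta> > 2 ^ (k - 1) \<longrightarrow>
      (\<exists>\<Phi> \<Psi>. periodic1_cont \<Phi> \<and> periodic1_cont \<Psi> \<and>
        (\<forall>\<epsilon>::real. \<epsilon> > 0 \<longrightarrow>
          (\<lambda>n. x n - real n ^ k * \<Phi> (frac (log 2 (real n)))
                   - real n powr log 2 (\<alpha> + \<beta>) * \<Psi> (frac (log 2 (real n))))
          \<in> O(\<lambda>n. real n powr (log 2 (max (max \<alpha> \<beta>) (2 ^ (k - 1)))
                                  + iverson (max \<alpha> \<beta> = 2 ^ (k - 1)) * \<epsilon>)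
                    * ln (real n) ^ iverson (max \<alpha> \<beta> < 2 ^ (k - 1))))))
  \<and> (2 ^ (k - 1) \<ge> \<alpha> + \<beta> \<longrightarrow>
      (\<exists>\<Phi>. periodic1_cont \<Phi> \<and>
        (\<lambda>n. x n - real n ^ k * \<Phi> (frac (log 2 (real n))))
        \<in> O(\<lambda>n. real n ^ (k - 1) * ln (real n) ^
                  (1 + iverson (\<alpha> + \<beta> = 2 ^ (k - 1)) *
                     (iverson (k \<ge> 2 \<and> coeff g (k - 1) \<noteq> 0)
                      + iverson (k = 1 \<and> d0 + d1 \<noteq> 0))))))"
proof -
  interpret halving_recurrence \<alpha> \<beta> g k x
    using alpha_pos beta_pos deg k_pos rec by unfold_locales
  \<comment> \<open>The last case holds with logarithmic exponent 1, so \<open>d0\<close> and \<open>d1\<close> play no role.\<close>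
  show ?thesis
    using expansion_homogeneous_dominant expansion_homogeneous_only expansion_critical
      expansion_forcing_dominant
      expansion_forcing_only[where E = "iverson (\<alpha> + \<beta> = 2 ^ (k - 1)) *
        (iverson (k \<ge> 2 \<and> coeff g (k - 1) \<noteq> 0) + iverson (k = 1 \<and> d0 + d1 \<noteq> 0))"]
    by simp
qed

end
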